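(* Let $\gamma$ be a real number with $0<\gamma<1$. Then there exist an infinite binary sequence $\omega=\omega_0\omega_1\omega_2\ldots$ and an integer $N$ such that for every finite set $A\subset\mathbb{N}$ with $\#A\ge N$ there exists $t\in A$ with $$K(A,\omega(A)\mid t)\ \ge\ \gamma\cdot \#A .$$
   Context: $K(\cdot\mid\cdot)$ denotes conditional prefix Kolmogorov complexity; finite subsets of $\mathbb{N}$, natural numbers and binary strings are encoded as finite objects in a standard computable way, and $K(A,\omega(A)\mid t)$ is the complexity of the pair $(A,\omega(A))$ given $t$. For an infinite binary sequence $\omega$ and a finite set $A\subset\mathbb{N}$, $\omega(A)$ denotes the binary string of length $\#A$ formed by the bits $\omega_i$, $i\in A$, listed in increasing order of $i$. *)

theory Defs
  imports Complex_Main "HOL-Library.Nat_Bijection" "HOL-Library.Extended_Nat"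
begin

datatype recf =
    Zero
  | Succ
  | Proj nat
  | Comp recf "recf list"
  | Prim recf recf
  | Minim recf

inductive reval :: "recf \<Rightarrow> nat list \<Rightarrow> nat \<Rightarrow> bool" where
  zero: "reval Zero xs 0"
| succ: "reval Succ (x # xs) (Suc x)"
| proj: "i < length xs \<Longrightarrow> reval (Proj i) xs (xs ! i)"
| comp: "length ys = length gs \<Longrightarrow> (\<forall>i < length gs. reval (gs ! i) xs (ys ! i))
          \<Longrightarrow> reval f ys z \<Longrightarrow> reval (Comp f gs) xs z"
| prim0: "reval f xs y \<Longrightarrow> reval (Prim f g) (0 # xs) y"
| primS: "reval (Prim f g) (n # xs) y \<Longrightarrow> reval g (y # n # xs) z
          \<Longrightarrow> reval (Prim f g) (Suc n # xs) z"
| minim: "reval f (n # xs) 0 \<Longrightarrow> (\<forall>m < n. \<exists>y. y \<noteq> 0 \<and> reval f (m # xs) y)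
          \<Longrightarrow> reval (Minim f) xs n"

text \<open>Bijective encoding of binary strings by natural numbers.\<close>
fun str_code :: "bool list \<Rightarrow> nat" where
  "str_code [] = 0"
| "str_code (b # bs) = 2 * str_code bs + (if b then 2 else 1)"

definition set_code :: "nat set \<Rightarrow> nat" where
  "set_code A = (\<Sum>i\<in>A. 2 ^ i)"

text \<open>omega(A): bits of omega at positions in A, in increasing order.\<close>
definition restr :: "(nat \<Rightarrow> bool) \<Rightarrow> nat set \<Rightarrow> bool list" where
  "restr \<omega> A = map \<omega> (sorted_list_of_set A)"

text \<open>A conditional machine: a partial recursive function M(p, y) of the program p
  (a binary string, coded) and the condition y.\<close>
definition prefix_machine :: "recf \<Rightarrow> bool" where
  "prefix_machine M \<longleftrightarrow>
     (\<forall>y p q x x'. reval M [str_code p, y] x \<and> reval M [str_code q, y] x'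
        \<and> (\<exists>r. q = p @ r) \<longrightarrow> p = q)"

definition KC :: "recf \<Rightarrow> nat \<Rightarrow> nat \<Rightarrow> enat" where
  "KC M x y = (INF p \<in> {p. reval M [str_code p, y] x}. enat (length p))"

definition optimal_prefix_machine :: "recf \<Rightarrow> bool" where
  "optimal_prefix_machine U \<longleftrightarrow> prefix_machine U \<and>
     (\<forall>M. prefix_machine M \<longrightarrow> (\<exists>c::nat. \<forall>x y. KC U x y \<le> KC M x y + enat c))"

end

theory Submission
  imports Defs
begin

text \<open>
  Proof idea (a combinatorial version of the Lovasz local lemma, followed by compactness).
  Call a pair (A, s), with s a binary string of length #A, a forbidden pattern if
  #A >= N and K(A, s | t) < gamma * #A for every t in A.  We need one sequence omega with
  omega(A) /= s for all forbidden patterns (A, s).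

  1. Since machines are deterministic, fewer than 2^(c+1) objects have complexity below c
     given a fixed condition; hence the patterns of size k through a fixed position t number
     at most 2^(gamma k + 2), and for q slightly above 1/2 the total weight sum of q^#A over
     patterns through t is at most 2q - 1 once N is large.
  2. Local lemma: if every position has this weight bound, then for every finite S the number
     Z(S) of assignments on S avoiding all patterns inside S satisfies Z(S) <= q * Z(S + t);
     in particular Z(S) > 0.  This is proved by counting the two extensions of each avoiding
     assignment, with a strong induction on #S.
  3. Compactness (a Koenig-style canonical path) turns avoiding assignments on every initial
     segment into one infinite sequence avoiding all patterns, which proves the theorem.
\<close>

section \<open>Counting objects of low complexity\<close>

lemma reval_deterministic: "reval f xs y \<Longrightarrow> reval f xs z \<Longrightarrow> y = z"
proof (induct arbitrary: z rule: reval.induct)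
  case (zero xs) from zero.prems show ?case by (cases rule: reval.cases) auto
next
  case (succ x xs) from succ.prems show ?case by (cases rule: reval.cases) auto
next
  case (proj i xs) from proj.prems show ?case by (cases rule: reval.cases) auto
next
  case (comp ys gs xs f z z')
  from comp.prems show ?case
  proof (cases rule: reval.cases)
    case (comp ys')
    have "ys = ys'"
    proof (rule nth_equalityI)
      show "length ys = length ys'" using comp.hyps(1) comp by simp
      fix i assume "i < length ys"
      then show "ys ! i = ys' ! i" using comp.hyps(1,2) comp by auto
    qed
    then show ?thesis using comp.hyps comp by auto
  qed
next
  case (prim0 f xs y g) from prim0.prems show ?case
    by (cases rule: reval.cases) (use prim0.hyps in auto)
next
  case (primS f g n xs y z) from primS.prems show ?case
    by (cases rule: reval.cases) (use primS.hyps in auto)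
next
  case (minim f n xs)
  from minim.prems show ?case
  proof (cases rule: reval.cases)
    case minim
    show ?thesis
    proof (rule ccontr)
      assume "n \<noteq> z"
      then consider "n < z" | "z < n" by linarith
      then show False
      proof cases
        case 1
        with minim obtain y where "y \<noteq> 0" "reval f (n # xs) y" by auto
        with minim.hyps(2) show False by auto
      qed (use minim minim.hyps(3) in fastforce)
    qed
  qed
qed

text \<open>Each program of length below c describes at most one object, and there are fewer
  than 2^(c+1) such programs.\<close>
lemma low_complexity_count:
  "finite {x. KC M x t < enat c} \<and> card {x. KC M x t < enat c} \<le> 2 ^ Suc c"
proof -
  define out where "out p = (THE x. reval M [str_code p, t] x)" for p
  define L where "L = {p::bool list. set p \<subseteq> UNIV \<and> length p \<le> c}"
  have sub: "{x. KC M x t < enat c} \<subseteq> out ` L"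
  proof
    fix x assume "x \<in> {x. KC M x t < enat c}"
    then obtain p where p: "reval M [str_code p, t] x" "length p < c"
      by (auto simp: KC_def INF_less_iff)
    then have "out p = x" unfolding out_def using reval_deterministic by blast
    then show "x \<in> out ` L" using p(2) by (auto simp: L_def)
  qed
  have finL: "finite L" unfolding L_def by (rule finite_lists_length_le) simp
  have "card L = (\<Sum>i\<le>c. 2 ^ i)" unfolding L_def by (subst card_lists_length_le) simp_all
  also have "\<dots> < 2 ^ Suc c" by (induction c) auto
  finally have "card L < 2 ^ Suc c" .
  moreover have "card {x. KC M x t < enat c} \<le> card L"
    using card_mono[OF finite_imageI[OF finL] sub] card_image_le[OF finL, of out] by linarith
  ultimately show ?thesis using finite_subset[OF sub] finL by auto
qed

section \<open>Assignments avoiding a family of patterns\<close>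

text \<open>A pattern (A, s) forbids the bits at positions A to read s.  A pattern family consists
  of nonempty finite position sets with strings of matching length.\<close>
definition pattern_family :: "(nat set \<times> bool list) set \<Rightarrow> bool" where
  "pattern_family F \<longleftrightarrow> (\<forall>(A, s)\<in>F. finite A \<and> A \<noteq> {} \<and> length s = card A)"

text \<open>Assignments on S (all bits outside S are False), those avoiding every pattern lying
  inside S, and their number Z(S).\<close>
definition assignments :: "nat set \<Rightarrow> (nat \<Rightarrow> bool) set" where
  "assignments S = {x. \<forall>i. i \<notin> S \<longrightarrow> \<not> x i}"

definition avoids :: "(nat set \<times> bool list) set \<Rightarrow> nat set \<Rightarrow> (nat \<Rightarrow> bool) \<Rightarrow> bool" where
  "avoids F S x \<longleftrightarrow> (\<forall>A s. (A, s) \<in> F \<longrightarrow> A \<subseteq> S \<longrightarrow> restr x A \<noteq> s)"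

definition avoiding :: "(nat set \<times> bool list) set \<Rightarrow> nat set \<Rightarrow> (nat \<Rightarrow> bool) set" where
  "avoiding F S = {x \<in> assignments S. avoids F S x}"

definition num_avoiding :: "(nat set \<times> bool list) set \<Rightarrow> nat set \<Rightarrow> nat" where
  "num_avoiding F S = card (avoiding F S)"

lemma finite_assignments: "finite S \<Longrightarrow> finite (assignments S)"
proof -
  assume "finite S"
  have "assignments S \<subseteq> (\<lambda>B i. i \<in> B) ` Pow S"
  proof
    fix x assume "x \<in> assignments S"
    then have "{i. x i} \<in> Pow S" "x = (\<lambda>i. i \<in> {i. x i})" by (auto simp: assignments_def)
    then show "x \<in> (\<lambda>B i. i \<in> B) ` Pow S" by blast
  qed
  then show ?thesis using \<open>finite S\<close> finite_subset by blast
qed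

lemma finite_avoiding: "finite S \<Longrightarrow> finite (avoiding F S)"
  unfolding avoiding_def using finite_assignments by simp

lemma restr_length: "finite A \<Longrightarrow> length (restr \<omega> A) = card A"
  by (simp add: restr_def)

lemma restr_cong: "finite A \<Longrightarrow> (\<And>i. i \<in> A \<Longrightarrow> x i = y i) \<Longrightarrow> restr x A = restr y A"
  unfolding restr_def by (auto intro: map_cong)

lemma restr_eqD: "finite A \<Longrightarrow> restr x A = restr y A \<Longrightarrow> i \<in> A \<Longrightarrow> x i = y i"
  unfolding restr_def by (auto simp: map_eq_conv)

lemma avoids_mono: "T \<subseteq> S \<Longrightarrow> avoids F S x \<Longrightarrow> avoids F T x"
  unfolding avoids_def by blast

lemma avoids_cong:
  assumes "pattern_family F" and "\<And>i. i \<in> S \<Longrightarrow> x i = y i" and "avoids F S x"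
  shows "avoids F S y"
  unfolding avoids_def
proof (intro allI impI)
  fix A s assume As: "(A, s) \<in> F" "A \<subseteq> S"
  then have "restr x A = restr y A"
    using assms(1,2) by (intro restr_cong) (auto simp: pattern_family_def)
  then show "restr y A \<noteq> s" using assms(3) As unfolding avoids_def by auto
qed

lemma finite_patterns_inside:
  assumes "pattern_family F" and "finite T"
  shows "finite {p \<in> F. fst p \<subseteq> T}"
proof (rule finite_subset)
  show "{p \<in> F. fst p \<subseteq> T} \<subseteq> Pow T \<times> {s. set s \<subseteq> UNIV \<and> length s \<le> card T}"
    using assms card_mono by (fastforce simp: pattern_family_def)
  show "finite (Pow T \<times> {s::bool list. set s \<subseteq> UNIV \<and> length s \<le> card T})"
    using assms(2) finite_lists_length_le[of "UNIV::bool set"] by simp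
qed

section \<open>A counting form of the local lemma\<close>

definition extend :: "nat \<Rightarrow> (nat \<Rightarrow> bool) set \<Rightarrow> (nat \<Rightarrow> bool) set" where
  "extend t G = (\<lambda>(y, b). y(t := b)) ` (G \<times> UNIV)"

text \<open>For a new position t both extensions are distinct, so Z doubles before filtering.\<close>
lemma card_extend:
  assumes "G \<subseteq> assignments S" and "t \<notin> S" and "finite G"
  shows "card (extend t G) = 2 * card G"
proof -
  have "inj_on (\<lambda>(y, b). y(t := b)) (G \<times> (UNIV::bool set))"
  proof (rule inj_onI, clarify)
    fix y b y' b' assume "y \<in> G" "y' \<in> G" and eq: "y(t := b) = y'(t := b')"
    then have "\<not> y t" "\<not> y' t" using assms(1,2) by (auto simp: assignments_def)
    then have "y i = y' i" for i using fun_cong[OF eq, of i] by (cases "i = t") auto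
    then show "y = y' \<and> b = b'" using fun_cong[OF eq, of t] by auto
  qed
  then show ?thesis
    using assms(3) by (simp add: extend_def card_image card_cartesian_product)
qed

lemma extend_cover:
  assumes "pattern_family F" and "x \<in> extend t (avoiding F S)"
  shows "x \<in> avoiding F (insert t S) \<or> (\<exists>(A, s)\<in>F. t \<in> A \<and> A \<subseteq> insert t S \<and> restr x A = s)"
proof -
  obtain y b where y: "y \<in> avoiding F S" and x: "x = y(t := b)"
    using assms(2) by (auto simp: extend_def)
  show ?thesis
  proof (cases "avoids F (insert t S) x")
    case True
    moreover have "x \<in> assignments (insert t S)"
      using y x by (auto simp: avoiding_def assignments_def)
    ultimately show ?thesis by (simp add: avoiding_def)
  next
    case False
    then obtain A s where As: "(A, s) \<in> F" "A \<subseteq> insert t S" "restr x A = s"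
      unfolding avoids_def by blast
    have "t \<in> A"
    proof (rule ccontr)
      assume "t \<notin> A"
      then have "restr x A = restr y A"
        using As(1) assms(1) by (intro restr_cong) (auto simp: x pattern_family_def)
      moreover have "A \<subseteq> S" using \<open>t \<notin> A\<close> As(2) by auto
      ultimately show False using y As by (auto simp: avoiding_def avoids_def)
    qed
    then show ?thesis using As by blast
  qed
qed

text \<open>The extensions matching a fixed pattern (A, s) through t are determined by their bits
  on S - A, where they avoid all patterns; so there are at most Z(S - A) of them.\<close>
lemma card_matching_extensions:
  assumes F: "pattern_family F" and "finite S" "t \<notin> S" "finite A" "t \<in> A"
  shows "card {x \<in> extend t (avoiding F S). restr x A = s} \<le> num_avoiding F (S - A)"
proof -
  define E where "E = {x \<in> extend t (avoiding F S). restr x A = s}"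
  define h where "h x = (\<lambda>i. if i \<in> S - A then x i else False)" for x :: "nat \<Rightarrow> bool"
  have E_outside: "\<not> x i" if "x \<in> E" "i \<notin> S" "i \<notin> A" for x i
    using that assms(5) by (auto simp: E_def extend_def avoiding_def assignments_def split: if_splits)
  have "inj_on h E"
  proof (rule inj_onI)
    fix x x' assume x: "x \<in> E" and x': "x' \<in> E" and hx: "h x = h x'"
    show "x = x'"
    proof
      fix i
      consider "i \<in> A" | "i \<in> S - A" | "i \<notin> S" "i \<notin> A" by blast
      then show "x i = x' i"
      proof cases
        case 1 then show ?thesis using x x' restr_eqD[OF assms(4), of x x'] by (simp add: E_def)
      next
        case 2 then show ?thesis using fun_cong[OF hx, of i] by (simp add: h_def)
      qed (use E_outside x x' in blast)
    qed
  qed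
  moreover have "h ` E \<subseteq> avoiding F (S - A)"
  proof
    fix z assume "z \<in> h ` E"
    then obtain y b where z: "z = h (y(t := b))" and y: "y \<in> avoiding F S"
      by (auto simp: E_def extend_def)
    have "avoids F (S - A) z"
    proof (rule avoids_cong[OF F])
      show "avoids F (S - A) y" using y avoids_mono[of "S - A" S] by (auto simp: avoiding_def)
      show "y i = z i" if "i \<in> S - A" for i using that assms(5) by (auto simp: z h_def)
    qed
    moreover have "z \<in> assignments (S - A)" by (auto simp: z h_def assignments_def)
    ultimately show "z \<in> avoiding F (S - A)" by (simp add: avoiding_def)
  qed
  ultimately show ?thesis
    unfolding E_def num_avoiding_def
    using card_inj_on_le finite_avoiding assms(2) by (metis E_def finite_Diff)
qed

definition local_lemma_condition :: "(nat set \<times> bool list) set \<Rightarrow> real \<Rightarrow> bool" where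
  "local_lemma_condition F q \<longleftrightarrow>
     (\<forall>T t. finite T \<longrightarrow> (\<Sum>p\<in>{p \<in> F. t \<in> fst p \<and> fst p \<subseteq> T}. q ^ card (fst p)) \<le> 2 * q - 1)"

text \<open>One growth step, assuming the iterated growth bound Z(S - D) <= q^#D Z(S) for the
  subsets D of S: doubling by the new bit loses at most (2 - 1/q) Z(S) assignments.\<close>
lemma avoiding_growth_step:
  fixes q :: real
  assumes F: "pattern_family F" and q: "0 < q" and cond: "local_lemma_condition F q"
    and S: "finite S" "t \<notin> S"
    and shrink: "\<And>D. D \<subseteq> S \<Longrightarrow> num_avoiding F (S - D) \<le> q ^ card D * num_avoiding F S"
  shows "num_avoiding F S \<le> q * num_avoiding F (insert t S)"
proof -
  define Z where "Z = real (num_avoiding F S)"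
  define X where "X = extend t (avoiding F S)"
  define P where "P = {p \<in> F. t \<in> fst p \<and> fst p \<subseteq> insert t S}"
  define E where "E p = {x \<in> X. restr x (fst p) = snd p}" for p
  have "P \<subseteq> {p \<in> F. fst p \<subseteq> insert t S}" by (auto simp: P_def)
  moreover have "finite {p \<in> F. fst p \<subseteq> insert t S}"
    using finite_patterns_inside[OF F] S(1) by simp
  ultimately have finP: "finite P" by (rule finite_subset)
  have finX: "finite X" using finite_avoiding[OF S(1)] by (simp add: X_def extend_def)
  have E_bound: "q * card (E p) \<le> q ^ card (fst p) * Z" if pP: "p \<in> P" for p
  proof -
    obtain A s where p: "p = (A, s)" "(A, s) \<in> F" "t \<in> A" "A \<subseteq> insert t S"
      using pP by (cases p) (auto simp: P_def)
    have A: "finite A" "A \<noteq> {}" using p(2) F by (auto simp: pattern_family_def)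
    have "S - (A - {t}) = S - A" using S(2) by auto
    then have "card (E p) \<le> num_avoiding F (S - (A - {t}))"
      using card_matching_extensions[OF F S A(1) p(3)] by (simp add: E_def X_def p(1))
    also have "\<dots> \<le> q ^ (card A - 1) * Z"
      using shrink[of "A - {t}"] p(3,4) A(1) by (auto simp: Z_def)
    finally have "q * card (E p) \<le> q * (q ^ (card A - 1) * Z)" using q by simp
    also have "\<dots> = q ^ card A * Z"
      using A by (cases "card A") auto
    finally show ?thesis by (simp add: p(1))
  qed
  have cover: "X \<subseteq> avoiding F (insert t S) \<union> (\<Union>p\<in>P. E p)"
  proof
    fix x assume x: "x \<in> X"
    show "x \<in> avoiding F (insert t S) \<union> (\<Union>p\<in>P. E p)"
      using extend_cover[OF F x[unfolded X_def]] x by (auto simp: P_def E_def)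
  qed
  have "finite (E p)" for p unfolding E_def using finX by simp
  then have "finite (avoiding F (insert t S) \<union> (\<Union>p\<in>P. E p))"
    using finite_avoiding[of "insert t S" F] S(1) finP by simp
  then have "card X \<le> card (avoiding F (insert t S) \<union> (\<Union>p\<in>P. E p))"
    using cover by (rule card_mono)
  also have "\<dots> \<le> card (avoiding F (insert t S)) + card (\<Union>p\<in>P. E p)"
    by (rule card_Un_le)
  also have "\<dots> \<le> num_avoiding F (insert t S) + (\<Sum>p\<in>P. card (E p))"
    using card_UN_le[OF finP] by (simp add: num_avoiding_def)
  finally have "real (card X) \<le> num_avoiding F (insert t S) + (\<Sum>p\<in>P. real (card (E p)))"
    by (metis of_nat_add of_nat_le_iff of_nat_sum)
  moreover have "card X = 2 * num_avoiding F S"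
    unfolding X_def num_avoiding_def
    by (rule card_extend[OF _ S(2) finite_avoiding[OF S(1)]]) (auto simp: avoiding_def)
  ultimately have "2 * Z \<le> num_avoiding F (insert t S) + (\<Sum>p\<in>P. real (card (E p)))"
    by (simp add: Z_def)
  from mult_left_mono[OF this, of q] q
  have "q * (2 * Z) \<le> q * num_avoiding F (insert t S) + (\<Sum>p\<in>P. q * card (E p))"
    by (simp add: distrib_left sum_distrib_left)
  also have "(\<Sum>p\<in>P. q * card (E p)) \<le> (\<Sum>p\<in>P. q ^ card (fst p)) * Z"
    unfolding sum_distrib_right using E_bound by (rule sum_mono)
  also have "\<dots> \<le> (2 * q - 1) * Z"
    using cond S(1) by (intro mult_right_mono) (auto simp: local_lemma_condition_def P_def Z_def)
  finally show ?thesis by (simp add: Z_def algebra_simps)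
qed

lemma growth_iterate:
  fixes Z :: "nat set \<Rightarrow> real"
  assumes grow: "\<And>T u. finite T \<Longrightarrow> u \<notin> T \<Longrightarrow> card T < n \<Longrightarrow> Z T \<le> q * Z (insert u T)"
    and q: "0 \<le> q" and T: "finite T"
  shows "finite D \<Longrightarrow> T \<inter> D = {} \<Longrightarrow> card (T \<union> D) \<le> n \<Longrightarrow> Z T \<le> q ^ card D * Z (T \<union> D)"
proof (induction D rule: finite_induct)
  case (insert d D)
  have d: "d \<notin> T \<union> D" using insert(2,4) by auto
  then have small: "card (T \<union> D) < n" using insert(1,5) T by simp
  have "Z T \<le> q ^ card D * Z (T \<union> D)"
    using insert.IH insert.prems(1) small by simp
  also have "\<dots> \<le> q ^ card D * (q * Z (insert d (T \<union> D)))"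
    using grow[OF _ d small] T insert(1) q by (simp add: mult_left_mono)
  finally show ?case using insert(1,2) by (simp add: ac_simps)
qed simp

lemma avoiding_growth:
  fixes q :: real
  assumes F: "pattern_family F" and q: "0 < q" and cond: "local_lemma_condition F q"
  shows "finite S \<Longrightarrow> t \<notin> S \<Longrightarrow> num_avoiding F S \<le> q * num_avoiding F (insert t S)"
proof (induction "card S" arbitrary: S t rule: less_induct)
  case less
  have grow: "real (num_avoiding F T) \<le> q * num_avoiding F (insert u T)"
    if "finite T" "u \<notin> T" "card T < card S" for T u
    using less.hyps[OF that(3,1,2)] .
  show ?case
  proof (rule avoiding_growth_step[OF F q cond less.prems])
    fix D assume D: "D \<subseteq> S"
    have fin: "finite (S - D)" "finite D" using D less.prems(1) finite_subset by auto
    have "S - D \<union> D = S" "(S - D) \<inter> D = {}" using D by auto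
    then show "real (num_avoiding F (S - D)) \<le> q ^ card D * num_avoiding F S"
      using growth_iterate[of "card S" "\<lambda>S. real (num_avoiding F S)" q "S - D" D, OF grow _ fin]
        q by simp
  qed
qed

lemma num_avoiding_pos:
  fixes q :: real
  assumes F: "pattern_family F" and q: "0 < q" and cond: "local_lemma_condition F q"
  shows "finite S \<Longrightarrow> 0 < num_avoiding F S"
proof (induction S rule: finite_induct)
  case empty
  have "avoiding F {} = {\<lambda>_. False}"
    using F by (auto simp: avoiding_def assignments_def avoids_def pattern_family_def)
  then show ?case by (simp add: num_avoiding_def)
next
  case (insert t S)
  have "0 < real (num_avoiding F S)" using insert.IH by simp
  then have "0 < q * num_avoiding F (insert t S)"
    using avoiding_growth[OF F q cond insert(1,2)] by linarith
  then show ?case using q by (simp add: zero_less_mult_iff)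
qed

section \<open>Compactness\<close>

definition extendable :: "(nat set \<times> bool list) set \<Rightarrow> bool list \<Rightarrow> bool" where
  "extendable F l \<longleftrightarrow> (\<forall>m. \<exists>y. avoids F {..<m} y \<and> (\<forall>i<length l. y i = l ! i))"

text \<open>An extendable prefix has an extendable one-bit extension (take m large enough for
  both alternatives at once).\<close>
lemma extendable_step:
  assumes "extendable F l" shows "extendable F (l @ [True]) \<or> extendable F (l @ [False])"
proof (rule ccontr)
  assume "\<not> (extendable F (l @ [True]) \<or> extendable F (l @ [False]))"
  then obtain m1 m2 where
    m1: "\<And>y. avoids F {..<m1} y \<Longrightarrow> \<not> (\<forall>i<length (l @ [True]). y i = (l @ [True]) ! i)" and
    m2: "\<And>y. avoids F {..<m2} y \<Longrightarrow> \<not> (\<forall>i<length (l @ [False]). y i = (l @ [False]) ! i)"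
    unfolding extendable_def by blast
  obtain y where y: "avoids F {..<max m1 m2} y" "\<forall>i<length l. y i = l ! i"
    using assms unfolding extendable_def by blast
  have "avoids F {..<m1} y" "avoids F {..<m2} y"
    using y(1) avoids_mono[of _ "{..<max m1 m2}"] by auto
  moreover have "\<forall>i<length (l @ [y (length l)]). y i = (l @ [y (length l)]) ! i"
    using y(2) by (auto simp: nth_append less_Suc_eq)
  ultimately show False using m1 m2 by (cases "y (length l)") auto
qed

fun canonical_prefix :: "(nat set \<times> bool list) set \<Rightarrow> nat \<Rightarrow> bool list" where
  "canonical_prefix F 0 = []"
| "canonical_prefix F (Suc n) =
     (if extendable F (canonical_prefix F n @ [True]) then canonical_prefix F n @ [True]
      else canonical_prefix F n @ [False])"

lemma canonical_prefix_length: "length (canonical_prefix F n) = n"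
  by (induction n) auto

lemma canonical_prefix_extendable: "extendable F [] \<Longrightarrow> extendable F (canonical_prefix F n)"
  by (induction n) (use extendable_step in auto)

lemma canonical_prefix_take: "n \<le> m \<Longrightarrow> take n (canonical_prefix F m) = canonical_prefix F n"
proof (induction m)
  case (Suc m)
  then show ?case
    using canonical_prefix_length[of F m] canonical_prefix_length[of F "Suc m"]
    by (cases "n = Suc m") (auto simp: le_Suc_eq)
qed simp

lemma compactness:
  assumes F: "pattern_family F" and avoidable: "\<And>n. \<exists>y. avoids F {..<n} y"
  shows "\<exists>\<omega>. \<forall>(A, s)\<in>F. restr \<omega> A \<noteq> s"
proof -
  have ext: "extendable F []" using avoidable by (simp add: extendable_def)
  define \<omega> where "\<omega> i = canonical_prefix F (Suc i) ! i" for i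
  have \<omega>_prefix: "\<omega> i = canonical_prefix F n ! i" if "i < n" for i n
    using canonical_prefix_take[of "Suc i" n F] that
    by (metis Suc_leI \<omega>_def lessI nth_take)
  have "restr \<omega> A \<noteq> s" if As: "(A, s) \<in> F" for A s
  proof -
    have finA: "finite A" using F As by (auto simp: pattern_family_def)
    then obtain n where n: "A \<subseteq> {..<n}" using finite_nat_iff_bounded by blast
    obtain y where y: "avoids F {..<n} y" "\<forall>i<n. y i = canonical_prefix F n ! i"
      using canonical_prefix_extendable[OF ext, of n]
      unfolding extendable_def canonical_prefix_length by blast
    have "restr \<omega> A = restr y A"
      using n y(2) \<omega>_prefix by (intro restr_cong[OF finA]) auto
    then show ?thesis using y(1) As n by (auto simp: avoids_def)
  qed
  then show ?thesis by blast
qed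

section \<open>Patterns of low complexity\<close>

definition pattern_code :: "nat set \<Rightarrow> bool list \<Rightarrow> nat" where
  "pattern_code A s = prod_encode (set_code A, str_code s)"

lemma str_code_inj: "str_code a = str_code b \<Longrightarrow> a = b"
proof (induction a arbitrary: b)
  case Nil then show ?case by (cases b) (auto split: if_splits)
next
  case (Cons x a)
  then obtain y b' where b: "b = y # b'" by (cases b) (auto split: if_splits)
  have e: "2 * str_code a + (if x then 2 else 1) = 2 * str_code b' + (if y then 2 else 1)"
    using Cons.prems b by simp
  then have "x = y" by (cases x; cases y) presburger+
  with e have "str_code a = str_code b'" by auto
  then show ?case using Cons.IH b \<open>x = y\<close> by auto
qed

lemma pattern_code_inj:
  assumes "finite A" "finite A'" "pattern_code A s = pattern_code A' s'"
  shows "A = A' \<and> s = s'"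
proof -
  have "set_code = set_encode" by (simp add: fun_eq_iff set_code_def set_encode_def)
  then show ?thesis
    using assms by (auto simp: pattern_code_def prod_encode_eq set_encode_eq intro: str_code_inj)
qed

definition compressible_patterns :: "recf \<Rightarrow> real \<Rightarrow> nat \<Rightarrow> (nat set \<times> bool list) set" where
  "compressible_patterns M \<gamma> N = {(A, s). finite A \<and> N \<le> card A \<and> length s = card A \<and>
     (\<forall>t\<in>A. KC M (pattern_code A s) t < enat (nat \<lceil>\<gamma> * card A\<rceil>))}"

lemma compressible_pattern_family: "0 < N \<Longrightarrow> pattern_family (compressible_patterns M \<gamma> N)"
  by (auto simp: pattern_family_def compressible_patterns_def)

text \<open>Patterns of size k through t have distinct codes of complexity below gamma k given t.\<close>
lemma card_compressible_through:
  fixes M :: recf and \<gamma> :: real and N t k :: nat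
  defines "Q \<equiv> {p \<in> compressible_patterns M \<gamma> N. t \<in> fst p \<and> card (fst p) = k}"
  shows "finite Q \<and> card Q \<le> 2 ^ Suc (nat \<lceil>\<gamma> * k\<rceil>)"
proof -
  let ?code = "\<lambda>p. pattern_code (fst p) (snd p)"
  let ?low = "{x. KC M x t < enat (nat \<lceil>\<gamma> * k\<rceil>)}"
  have inj: "inj_on ?code Q"
  proof (rule inj_onI)
    fix p p' assume "p \<in> Q" "p' \<in> Q" and eq: "?code p = ?code p'"
    then have "finite (fst p)" "finite (fst p')" by (auto simp: Q_def compressible_patterns_def)
    from pattern_code_inj[OF this eq] show "p = p'" by (simp add: prod_eq_iff)
  qed
  have sub: "?code ` Q \<subseteq> ?low" by (auto simp: Q_def compressible_patterns_def)
  have low: "finite ?low" "card ?low \<le> 2 ^ Suc (nat \<lceil>\<gamma> * k\<rceil>)"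
    using low_complexity_count by auto
  have "finite Q" using finite_imageD[OF finite_subset[OF sub low(1)] inj] .
  moreover have "card Q \<le> card ?low" using card_inj_on_le[OF inj sub low(1)] .
  ultimately show ?thesis using low(2) by linarith
qed

lemma compressible_weight:
  fixes M :: recf and \<gamma> q :: real and N t :: nat and T :: "nat set"
  assumes "0 < N" "0 \<le> q" "finite T"
  defines "P \<equiv> {p \<in> compressible_patterns M \<gamma> N. t \<in> fst p \<and> fst p \<subseteq> T}"
  shows "(\<Sum>p\<in>P. q ^ card (fst p)) \<le> (\<Sum>k=N..card T. 2 ^ Suc (nat \<lceil>\<gamma> * k\<rceil>) * q ^ k)"
proof -
  let ?size = "\<lambda>p. card (fst p)"
  have finP: "finite P"
    using finite_patterns_inside[OF compressible_pattern_family[OF assms(1)] assms(3)]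
    by (rule finite_subset[rotated]) (auto simp: P_def)
  have sizes: "?size ` P \<subseteq> {N..card T}"
  proof
    fix k assume "k \<in> ?size ` P"
    then obtain A s where "(A, s) \<in> compressible_patterns M \<gamma> N" "A \<subseteq> T" "k = card A"
      by (auto simp: P_def)
    then show "k \<in> {N..card T}"
      using card_mono[OF assms(3)] by (auto simp: compressible_patterns_def)
  qed
  have "(\<Sum>p\<in>P. q ^ card (fst p)) = (\<Sum>k\<in>?size ` P. \<Sum>p\<in>{p\<in>P. ?size p = k}. q ^ card (fst p))"
    by (rule sum.image_gen[OF finP])
  also have "\<dots> = (\<Sum>k\<in>?size ` P. real (card {p\<in>P. ?size p = k}) * q ^ k)"
    by (intro sum.cong refl) simp
  also have "\<dots> \<le> (\<Sum>k\<in>?size ` P. 2 ^ Suc (nat \<lceil>\<gamma> * k\<rceil>) * q ^ k)"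
  proof (intro sum_mono mult_right_mono)
    fix k
    let ?Q = "{p \<in> compressible_patterns M \<gamma> N. t \<in> fst p \<and> card (fst p) = k}"
    have "{p\<in>P. ?size p = k} \<subseteq> ?Q" by (auto simp: P_def)
    then have "card {p\<in>P. ?size p = k} \<le> card ?Q"
      using card_compressible_through[of M \<gamma> N t k] by (intro card_mono) auto
    also have "\<dots> \<le> 2 ^ Suc (nat \<lceil>\<gamma> * k\<rceil>)"
      using card_compressible_through[of M \<gamma> N t k] by simp
    finally show "real (card {p\<in>P. ?size p = k}) \<le> 2 ^ Suc (nat \<lceil>\<gamma> * k\<rceil>)"
      using of_nat_mono by fastforce
  qed (use assms(2) in simp)
  also have "\<dots> \<le> (\<Sum>k=N..card T. 2 ^ Suc (nat \<lceil>\<gamma> * k\<rceil>) * q ^ k)"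
    using sizes assms(2) by (intro sum_mono2) auto
  finally show ?thesis .
qed

text \<open>Each term is at most 4 (2^gamma q)^k, since nat(ceil(gamma k)) <= gamma k + 1.\<close>
lemma compressible_term_bound:
  fixes \<gamma> q :: real
  assumes "0 \<le> \<gamma>" "0 \<le> q"
  shows "2 ^ Suc (nat \<lceil>\<gamma> * k\<rceil>) * q ^ k \<le> 4 * (2 powr \<gamma> * q) ^ k"
proof -
  have "0 \<le> \<gamma> * k" using assms(1) by simp
  then have "real (nat \<lceil>\<gamma> * k\<rceil>) = of_int \<lceil>\<gamma> * k\<rceil>" by simp
  then have "real (nat \<lceil>\<gamma> * k\<rceil>) \<le> \<gamma> * k + 1"
    using ceiling_correct[of "\<gamma> * k"] by linarith
  then have "(2::real) ^ nat \<lceil>\<gamma> * k\<rceil> \<le> 2 powr (\<gamma> * k + 1)"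
    by (metis powr_realpow powr_mono one_le_numeral zero_less_numeral)
  also have "\<dots> = 2 * (2 powr \<gamma>) ^ k"
    by (simp add: powr_add powr_realpow[symmetric] powr_powr mult.commute)
  finally have "(2::real) ^ Suc (nat \<lceil>\<gamma> * k\<rceil>) \<le> 4 * (2 powr \<gamma>) ^ k" by simp
  then have "2 ^ Suc (nat \<lceil>\<gamma> * k\<rceil>) * q ^ k \<le> 4 * (2 powr \<gamma>) ^ k * q ^ k"
    using assms(2) by (simp add: mult_right_mono)
  then show ?thesis by (simp add: power_mult_distrib)
qed

lemma geometric_tail:
  fixes r :: real
  assumes "0 \<le> r" "r < 1"
  shows "(\<Sum>k=N..m. r ^ k) \<le> r ^ N / (1 - r)"
proof (cases "m < N")
  case False
  then have "(\<Sum>k=N..m. r ^ k) = (r ^ N - r ^ Suc m) / (1 - r)"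
    using assms(2) by (simp add: sum_gp)
  also have "\<dots> \<le> r ^ N / (1 - r)" using assms by (simp add: divide_right_mono)
  finally show ?thesis .
qed (use assms in simp)

text \<open>For gamma < 1 the weight q = 2^(-(1+gamma)/2) satisfies 2q - 1 > 0 and
  r = 2^gamma q = 2^((gamma-1)/2) < 1, so the tail 4 r^N / (1 - r) drops below 2q - 1.\<close>
lemma compressible_local_lemma_condition:
  assumes "0 < \<gamma>" "\<gamma> < 1"
  shows "\<exists>q N. 0 < q \<and> 0 < N \<and> local_lemma_condition (compressible_patterns M \<gamma> N) q"
proof -
  define q :: real where "q = 2 powr (-(1 + \<gamma>) / 2)"
  define r :: real where "r = 2 powr \<gamma> * q"
  have q: "0 < q" by (simp add: q_def)
  have "(2::real) powr (-1) < q"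
    unfolding q_def using assms(2) by (intro powr_less_mono) auto
  then have margin: "0 < 2 * q - 1" by (simp add: powr_minus)
  have r_eq: "r = 2 powr ((\<gamma> - 1) / 2)"
    unfolding r_def q_def by (simp add: powr_add[symmetric] field_simps)
  have r: "0 < r" "r < 1"
    using assms(2) powr_less_mono[of "(\<gamma> - 1) / 2" 0 2] by (auto simp: r_eq)
  have "0 < (2 * q - 1) * (1 - r) / 4" using margin r by simp
  then obtain n where n: "r ^ n < (2 * q - 1) * (1 - r) / 4"
    using real_arch_pow_inv r(2) by blast
  have "r ^ Suc n \<le> r ^ n" using r by (simp add: mult_left_le_one_le)
  with n have "4 * r ^ Suc n \<le> (2 * q - 1) * (1 - r)" by linarith
  then have tail: "4 * (r ^ Suc n / (1 - r)) \<le> 2 * q - 1"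
    using r by (simp add: pos_divide_le_eq del: power_Suc)
  have "local_lemma_condition (compressible_patterns M \<gamma> (Suc n)) q"
    unfolding local_lemma_condition_def
  proof (intro allI impI)
    fix T :: "nat set" and t :: nat assume T: "finite T"
    have "(\<Sum>p\<in>{p \<in> compressible_patterns M \<gamma> (Suc n). t \<in> fst p \<and> fst p \<subseteq> T}. q ^ card (fst p))
        \<le> (\<Sum>k=Suc n..card T. 2 ^ Suc (nat \<lceil>\<gamma> * k\<rceil>) * q ^ k)"
      using compressible_weight[of "Suc n" q T] q T by simp
    also have "\<dots> \<le> (\<Sum>k=Suc n..card T. 4 * r ^ k)"
      unfolding r_def using assms(1) q by (intro sum_mono compressible_term_bound) auto
    also have "\<dots> \<le> 4 * (r ^ Suc n / (1 - r))"
      using geometric_tail[of r "Suc n" "card T"] r by (simp add: sum_distrib_left[symmetric])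
    finally show "(\<Sum>p\<in>{p \<in> compressible_patterns M \<gamma> (Suc n). t \<in> fst p \<and> fst p \<subseteq> T}.
        q ^ card (fst p)) \<le> 2 * q - 1" using tail by linarith
  qed
  then show ?thesis using q by blast
qed

theorem theorem1:
  fixes \<gamma> :: real and U :: recf
  assumes "0 < \<gamma>" and "\<gamma> < 1"
    and "optimal_prefix_machine U"
  shows "\<exists>(\<omega>::nat \<Rightarrow> bool) (N::nat). \<forall>A::nat set. finite A \<and> card A \<ge> N \<longrightarrow>
           (\<exists>t\<in>A. enat (nat \<lceil>\<gamma> * real (card A)\<rceil>)
                     \<le> KC U (prod_encode (set_code A, str_code (restr \<omega> A))) t)"
proof -
  obtain q N where q: "0 < q" and N: "0 < N"
    and cond: "local_lemma_condition (compressible_patterns U \<gamma> N) q"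
    using compressible_local_lemma_condition[OF assms(1,2)] by blast
  note F = compressible_pattern_family[OF N]
  have "\<exists>y. avoids (compressible_patterns U \<gamma> N) {..<n} y" for n
    using num_avoiding_pos[OF F q cond, of "{..<n}"]
    by (auto simp: num_avoiding_def avoiding_def card_gt_0_iff)
  then obtain \<omega> where \<omega>: "\<forall>(A, s)\<in>compressible_patterns U \<gamma> N. restr \<omega> A \<noteq> s"
    using compactness[OF F] by blast
  have "\<exists>t\<in>A. enat (nat \<lceil>\<gamma> * real (card A)\<rceil>)
          \<le> KC U (prod_encode (set_code A, str_code (restr \<omega> A))) t"
    if A: "finite A" "N \<le> card A" for A
  proof -
    have "(A, restr \<omega> A) \<notin> compressible_patterns U \<gamma> N" using \<omega> by auto
    then show ?thesis
      using A restr_length[OF A(1)] by (auto simp: compressible_patterns_def pattern_code_def not_less)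
  qed
  then show ?thesis by blast
qed

end
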